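(* Let $N$ be a positive integer, $R\in\{0,\dots,N\}$, $n\in\{1,\dots,N\}$, and let $X$ have the hypergeometric distribution $\Pr\{X=x\}=\binom Rx\binom{N-R}{n-x}/\binom Nn$ for $x\in\{0,\dots,n\}$ with $x\le R$ and $n-x\le N-R$, and $\Pr\{X=x\}=0$ for other $x\in\{0,\dots,n\}$. Let $r\in\{0,\dots,n\}$ with $R+n-N\le r\le R$, and let $\mathscr{A}=\{\vartheta\in\mathbb{Z}^+:r\le\vartheta\le R\}$, $\mathscr{B}=\{\vartheta\in\mathbb{Z}^+:R\le\vartheta\le r+N-n\}$. Then $$\Pr\{X\le r\}\le\frac{\binom Rr\binom{N-R}{n-r}}{\binom\vartheta r\binom{N-\vartheta}{n-r}}\ \text{ for }\vartheta\in\mathscr{A},\qquad \Pr\{X\ge r\}\le\frac{\binom Rr\binom{N-R}{n-r}}{\binom\vartheta r\binom{N-\vartheta}{n-r}}\ \text{ for }\vartheta\in\mathscr{B}.$$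
   Context: $\mathbb{Z}^+$ denotes the set of nonnegative integers. *)

theory Defs
  imports Complex_Main
begin

definition hyp_pmf :: "nat \<Rightarrow> nat \<Rightarrow> nat \<Rightarrow> nat \<Rightarrow> real" where
  "hyp_pmf N R n x =
     (if x \<le> n \<and> x \<le> R \<and> n - x \<le> N - R
      then real (R choose x) * real ((N - R) choose (n - x)) / real (N choose n)
      else 0)"

definition hyp_cdf_le :: "nat \<Rightarrow> nat \<Rightarrow> nat \<Rightarrow> nat \<Rightarrow> real" where
  "hyp_cdf_le N R n r = (\<Sum>x\<in>{0..n}. if x \<le> r then hyp_pmf N R n x else 0)"

definition hyp_cdf_ge :: "nat \<Rightarrow> nat \<Rightarrow> nat \<Rightarrow> nat \<Rightarrow> real" where
  "hyp_cdf_ge N R n r = (\<Sum>x\<in>{0..n}. if r \<le> x then hyp_pmf N R n x else 0)"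

end

theory Submission
  imports Defs
begin

text \<open>Write \<open>w\<^sub>\<theta>(x) = C(\<theta>,x) C(N-\<theta>,n-x)\<close>, so that the hypergeometric law with \<open>\<theta>\<close>
  successes is \<open>w\<^sub>\<theta> / C(N,n)\<close>. The kernel \<open>(\<theta>, x) \<mapsto> w\<^sub>\<theta>(x)\<close> is totally positive of order 2,
  i.e. the likelihood ratio \<open>w\<^sub>R(x) / w\<^sub>\<theta>(x)\<close> is monotone in \<open>x\<close>. For \<open>\<theta> \<le> R\<close> it is
  nondecreasing, so on \<open>x \<le> r\<close> it is at most its value at \<open>r\<close>; hence
  \<open>Pr\<^sub>R{X \<le> r} \<le> (w\<^sub>R(r) / w\<^sub>\<theta>(r)) Pr\<^sub>\<theta>{X \<le> r} \<le> w\<^sub>R(r) / w\<^sub>\<theta>(r)\<close>.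
  The upper tail is symmetric.\<close>

definition hyp_weight :: "nat \<Rightarrow> nat \<Rightarrow> nat \<Rightarrow> nat \<Rightarrow> nat" where
  "hyp_weight N \<theta> n x = (\<theta> choose x) * ((N - \<theta>) choose (n - x))"

lemma Suc_times_binomial_Suc: "Suc k * (a choose Suc k) = (a - k) * (a choose k)"
proof (cases a)
  case 0
  then show ?thesis by simp
next
  case (Suc a')
  then show ?thesis using Suc_times_binomial[of k a'] binomial_absorb_comp[of a k] by simp
qed

lemma binomial_mult_le_swap:
  assumes "a \<le> b" "m \<le> k"
  shows "(a choose k) * (b choose m) \<le> (a choose m) * (b choose k)"
  using assms(2)
proof (induction k rule: dec_induct)
  case base
  then show ?case by (simp add: mult.commute)
next
  case (step k)
  \<comment> \<open>the ratio \<open>C(a,k+1) / C(a,k) = (a-k)/(k+1)\<close> is nondecreasing in \<open>a\<close>\<close>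
  have "Suc k * ((a choose Suc k) * (b choose m)) = (a - k) * ((a choose k) * (b choose m))"
    by (simp only: mult.assoc[symmetric] Suc_times_binomial_Suc)
  also have "\<dots> \<le> (b - k) * ((a choose m) * (b choose k))"
    using step.IH assms(1) by (simp add: mult_le_mono diff_le_mono)
  also have "\<dots> = Suc k * ((a choose m) * (b choose Suc k))"
    by (simp only: Suc_times_binomial_Suc mult.left_commute[of "Suc k"] mult.left_commute[of "b - k"])
  finally show ?case by (metis mult_le_cancel1 zero_less_Suc)
qed

lemma hyp_weight_TP2:
  assumes "\<theta> \<le> \<theta>'" "x \<le> x'"
  shows "hyp_weight N \<theta>' n x * hyp_weight N \<theta> n x' \<le> hyp_weight N \<theta>' n x' * hyp_weight N \<theta> n x"
proof -
  have "(\<theta> choose x') * (\<theta>' choose x) \<le> (\<theta> choose x) * (\<theta>' choose x')"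
    using binomial_mult_le_swap assms by blast
  moreover have "((N - \<theta>') choose (n - x)) * ((N - \<theta>) choose (n - x'))
      \<le> ((N - \<theta>') choose (n - x')) * ((N - \<theta>) choose (n - x))"
    using binomial_mult_le_swap[of "N - \<theta>'" "N - \<theta>" "n - x'" "n - x"] assms by simp
  ultimately have "((\<theta> choose x') * (\<theta>' choose x)) * (((N - \<theta>') choose (n - x)) * ((N - \<theta>) choose (n - x')))
      \<le> ((\<theta> choose x) * (\<theta>' choose x')) * (((N - \<theta>') choose (n - x')) * ((N - \<theta>) choose (n - x)))"
    by (rule mult_le_mono)
  then show ?thesis
    unfolding hyp_weight_def by (simp only: ac_simps)
qed

lemma hyp_weight_pos: "r \<le> \<theta> \<Longrightarrow> n - r \<le> N - \<theta> \<Longrightarrow> 0 < hyp_weight N \<theta> n r"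
  by (simp add: hyp_weight_def)

lemma hyp_pmf_eq_weight:
  "x \<le> n \<Longrightarrow> hyp_pmf N R n x = real (hyp_weight N R n x) / real (N choose n)"
  by (auto simp: hyp_pmf_def hyp_weight_def binomial_eq_0)

lemma sum_hyp_pmf:
  assumes "\<theta> \<le> N" "n \<le> N"
  shows "(\<Sum>x\<in>{0..n}. hyp_pmf N \<theta> n x) = 1"
proof -
  have "(\<Sum>x\<le>n. hyp_weight N \<theta> n x) = N choose n"
    using vandermonde[of \<theta> "N - \<theta>" n] assms(1) by (simp add: hyp_weight_def)
  then have "(\<Sum>x\<in>{0..n}. real (hyp_weight N \<theta> n x)) = real (N choose n)"
    by (metis atLeast0AtMost of_nat_sum)
  then show ?thesis
    using assms(2) by (simp add: hyp_pmf_eq_weight sum_divide_distrib[symmetric])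
qed

lemma hyp_tail_le_likelihood_ratio:
  fixes P :: "nat \<Rightarrow> bool"
  assumes "\<theta> \<le> N" "n \<le> N" and pos: "0 < hyp_weight N \<theta> n r"
    and ratio: "\<And>x. x \<le> n \<Longrightarrow> P x \<Longrightarrow>
      hyp_weight N R n x * hyp_weight N \<theta> n r \<le> hyp_weight N R n r * hyp_weight N \<theta> n x"
  shows "(\<Sum>x\<in>{0..n}. if P x then hyp_pmf N R n x else 0)
    \<le> real (hyp_weight N R n r) / real (hyp_weight N \<theta> n r)"
proof -
  define c where "c = real (hyp_weight N R n r) / real (hyp_weight N \<theta> n r)"
  have term_le: "(if P x then hyp_pmf N R n x else 0) \<le> c * hyp_pmf N \<theta> n x" if "x \<in> {0..n}" for x
  proof (cases "P x")
    case True
    have "real (hyp_weight N R n x) * real (hyp_weight N \<theta> n r)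
        \<le> real (hyp_weight N R n r) * real (hyp_weight N \<theta> n x)"
      using ratio[of x] that True by (metis atLeastAtMost_iff of_nat_le_iff of_nat_mult)
    then have "real (hyp_weight N R n x) \<le> c * real (hyp_weight N \<theta> n x)"
      using pos unfolding c_def by (simp add: field_simps)
    then show ?thesis
      using True that by (simp add: hyp_pmf_eq_weight divide_right_mono)
  next
    case False
    then show ?thesis by (simp add: c_def hyp_pmf_def)
  qed
  have "(\<Sum>x\<in>{0..n}. if P x then hyp_pmf N R n x else 0) \<le> (\<Sum>x\<in>{0..n}. c * hyp_pmf N \<theta> n x)"
    by (rule sum_mono) (rule term_le)
  also have "\<dots> = c"
    using sum_hyp_pmf[OF assms(1,2)] by (simp add: sum_distrib_left[symmetric])
  finally show ?thesis unfolding c_def .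
qed

theorem lemma6:
  fixes N R n r :: nat
  assumes "0 < N" and "R \<le> N" and "1 \<le> n" and "n \<le> N"
    and "r \<le> n" and "int R + int n - int N \<le> int r" and "r \<le> R"
  shows "(\<forall>\<theta>::nat. r \<le> \<theta> \<and> \<theta> \<le> R \<longrightarrow>
            hyp_cdf_le N R n r \<le>
              real (R choose r) * real ((N - R) choose (n - r))
              / (real (\<theta> choose r) * real ((N - \<theta>) choose (n - r))))
       \<and> (\<forall>\<theta>::nat. R \<le> \<theta> \<and> \<theta> \<le> r + N - n \<longrightarrow>
            hyp_cdf_ge N R n r \<le>
              real (R choose r) * real ((N - R) choose (n - r))
              / (real (\<theta> choose r) * real ((N - \<theta>) choose (n - r))))"
proof (intro conjI allI impI)
  fix \<theta> :: nat
  assume \<theta>: "r \<le> \<theta> \<and> \<theta> \<le> R"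
  have "hyp_cdf_le N R n r \<le> real (hyp_weight N R n r) / real (hyp_weight N \<theta> n r)"
    unfolding hyp_cdf_le_def
    using \<theta> assms hyp_weight_TP2[of \<theta> R _ r]
    by (intro hyp_tail_le_likelihood_ratio hyp_weight_pos) auto
  then show "hyp_cdf_le N R n r \<le> real (R choose r) * real ((N - R) choose (n - r))
      / (real (\<theta> choose r) * real ((N - \<theta>) choose (n - r)))"
    by (simp add: hyp_weight_def)
next
  fix \<theta> :: nat
  assume \<theta>: "R \<le> \<theta> \<and> \<theta> \<le> r + N - n"
  have "hyp_cdf_ge N R n r \<le> real (hyp_weight N R n r) / real (hyp_weight N \<theta> n r)"
    unfolding hyp_cdf_ge_def
    using \<theta> assms hyp_weight_TP2[of R \<theta> r]
    by (intro hyp_tail_le_likelihood_ratio hyp_weight_pos) (auto simp: ac_simps)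
  then show "hyp_cdf_ge N R n r \<le> real (R choose r) * real ((N - R) choose (n - r))
      / (real (\<theta> choose r) * real ((N - \<theta>) choose (n - r)))"
    by (simp add: hyp_weight_def)
qed

end
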